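(* Let $d\geq 2$ and $m\geq 1$ be integers. Let $\{e^d_k\}$ and $\{e^{d+m}_k\}$ be the standard bases of $\mathbb{C}^d$ and $\mathbb{C}^{d+m}$, and let $|J\rangle=\sum_{k=1}^d e^d_k$. Define $d\times(d+m)$ matrices $$V_i=\sum_{k=1}^{d}|e^d_k\rangle\langle e^{d+m}_{\mathrm{mod}(k+i-2,\,d+1)+1}|\quad (i=1,\dots,d+1),\qquad V_i=|J\rangle\langle e^{d+m}_i|\quad (i=d+2,\dots,d+m),$$ where $\mathrm{mod}(a,n)\in\{0,\dots,n-1\}$ is the remainder of $a$ modulo $n$, and let $\Phi:M_d\to M_{d+m}$ be $\Phi(X)=\frac{1}{d(d+m)}\sum_{i=1}^{d+m}V_i^\dagger XV_i$. Then the entanglement breaking rank of $\Phi$ equals $d+m$.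
   Context: $M_n$ denotes the complex $n\times n$ matrices. A completely positive map is entanglement breaking if its Choi matrix $\sum_{r,s}E_{rs}\otimes\Phi(E_{rs})$ is separable; equivalently, it admits a Kraus decomposition with all Kraus operators of rank one. The entanglement breaking rank of an entanglement breaking map $\Phi$ is the smallest $N$ such that $\Phi(X)=\sum_{i=1}^N R_iXR_i^\dagger$ with every $R_i$ of rank one. *)

theory Defs
  imports "Jordan_Normal_Form.Schur_Decomposition" "Jordan_Normal_Form.DL_Rank"
begin

definition mat_sum :: "nat \<Rightarrow> nat \<Rightarrow> (nat \<Rightarrow> complex mat) \<Rightarrow> nat \<Rightarrow> complex mat" where
  "mat_sum nr nc f N = mat nr nc (\<lambda>(a,b). \<Sum>i<N. f i $$ (a,b))"

definition mrank :: "nat \<Rightarrow> complex mat \<Rightarrow> nat" where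
  "mrank nr A = vec_space.rank nr A"

definition rank_one_kraus :: "nat \<Rightarrow> nat \<Rightarrow> (complex mat \<Rightarrow> complex mat) \<Rightarrow> nat \<Rightarrow> bool" where
  "rank_one_kraus n k Phi N \<longleftrightarrow>
     (\<exists>R :: nat \<Rightarrow> complex mat.
        (\<forall>i<N. R i \<in> carrier_mat k n \<and> mrank k (R i) = 1) \<and>
        (\<forall>X \<in> carrier_mat n n. Phi X = mat_sum k k (\<lambda>i. R i * X * mat_adjoint (R i)) N))"

definition entanglement_breaking :: "nat \<Rightarrow> nat \<Rightarrow> (complex mat \<Rightarrow> complex mat) \<Rightarrow> bool" where
  "entanglement_breaking n k Phi \<longleftrightarrow> (\<exists>N. rank_one_kraus n k Phi N)"

definition eb_rank :: "nat \<Rightarrow> nat \<Rightarrow> (complex mat \<Rightarrow> complex mat) \<Rightarrow> nat" where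
  "eb_rank n k Phi = (LEAST N. rank_one_kraus n k Phi N)"

text \<open>The d x (d+m) matrices V_i, with 0-based index i = 0..d+m-1 (paper's i-1).
  For i < d+1: V_i = sum_k |e_k><e_{(k+i) mod (d+1)}| (0-based k);
  for i >= d+1: V_i = |J><e_i|.\<close>
definition Vmat :: "nat \<Rightarrow> nat \<Rightarrow> nat \<Rightarrow> complex mat" where
  "Vmat d m i = mat d (d+m) (\<lambda>(k,j).
      if i \<le> d then (if j = (k + i) mod (d+1) then 1 else 0)
      else (if j = i then 1 else 0))"

definition Phi_map :: "nat \<Rightarrow> nat \<Rightarrow> complex mat \<Rightarrow> complex mat" where
  "Phi_map d m X = (1 / of_nat (d * (d+m))) \<cdot>\<^sub>m
     mat_sum (d+m) (d+m) (\<lambda>i. mat_adjoint (Vmat d m i) * X * Vmat d m i) (d+m)"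

end

theory Submission
  imports Defs "Jordan_Normal_Form.DL_Rank_Submatrix" "HOL-Number_Theory.Cong"
begin

text \<open>
  Lower bound: Phi(I) = I / (d + m) has rank d + m, while every term R X R^dagger with R of
  rank one has rank at most one, so a rank-one Kraus decomposition has at least d + m terms.

  Upper bound: V_i for i > d + 1 already has rank one. The first d + 1 operators V_i are the
  cyclic shifts of Z/(d+1), cut down to d rows, and shifts are diagonalised by the discrete
  Fourier transform. By orthogonality of the characters of Z/(d+1), the d + 1 rank-one
  operators |f_t><g_t| with f_t = (w^(t r))_(r <= d), g_t = (w^(t a))_(a < d) and w a primitive
  (d+1)-st root of unity have, up to the factor d + 1, the same coefficient tensor
  sum_i conj (V_i(a,j)) V_i(b,l) as the shifts, hence induce the same map.
\<close>

lemma (in vec_space) rank_mult_le: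
  assumes A: "A \<in> carrier_mat n k" and B: "B \<in> carrier_mat k q"
  shows "rank (A * B) \<le> rank A"
proof -
  have cA: "set (cols A) \<subseteq> carrier_vec n" using A cols_dim by blast
  have sub: "set (cols (A * B)) \<subseteq> span (set (cols A))"
  proof
    fix v assume "v \<in> set (cols (A * B))"
    then obtain j where "j < dim_col (A * B)" "v = col (A * B) j"
      by (metis cols_length cols_nth in_set_conv_nth)
    then have "v = A *\<^sub>v col B j" using A B by (simp add: mult_mat_vec_def)
    moreover have "col B j \<in> carrier_vec k" using B col_dim by (metis carrier_matD(1))
    ultimately have "v \<in> col_space A" unfolding col_space_eq[OF A] using A by auto
    then show "v \<in> span (set (cols A))" unfolding col_space_def .
  qed
  have vs: "vectorspace class_ring (vs (span (set (cols A))))"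
    using span_is_subspace[THEN subspace_is_vs, OF cA] by simp
  have "submodule class_ring (span (set (cols A))) V" by (simp add: span_is_submodule cA)
  then have "VectorSpace.subspace class_ring (span (set (cols (A * B)))) (vs (span (set (cols A))))"
    using vectorspace.span_is_subspace[OF vs, of "set (cols (A * B))"] span_li_not_depend(1)[OF sub] sub
    by simp
  moreover have "vectorspace.fin_dim class_ring (vs (span (set (cols A))))"
    using fin_dim_span_cols[OF A] by simp
  ultimately show ?thesis
    unfolding rank_def using vectorspace.subspace_dim[OF vs] fin_dim_span_cols[OF mult_carrier_mat[OF A B]]
    by simp
qed

lemma (in vec_space) rank_pos_if_nonzero_entry:
  assumes A: "A \<in> carrier_mat n nc" and r: "r < n" and c: "c < nc" and nz: "A $$ (r, c) \<noteq> 0"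
  shows "0 < rank A"
proof -
  have "{i. i < dim_row A \<and> i \<in> {r}} = {r}" "{j. j < dim_col A \<and> j \<in> {c}} = {c}"
    using A r c by auto
  then have S: "submatrix A {r} {c} \<in> carrier_mat 1 1"
    unfolding carrier_mat_def using dim_submatrix[of A "{r}" "{c}"] by simp
  have no_smaller: "{i \<in> {r}. i < r} = {}" "{j \<in> {c}. j < c} = {}" by auto
  have "submatrix A {r} {c} $$ (0, 0) = A $$ (r, c)"
    using submatrix_index_card[of r A c "{r}" "{c}"] A r c unfolding no_smaller by simp
  then have "det (submatrix A {r} {c}) \<noteq> 0" using det_single[OF S] nz by simp
  from rank_gt_minor[OF A this] have "card {j. j < nc \<and> j \<in> {c}} \<le> rank A" .
  moreover have "{j. j < nc \<and> j \<in> {c}} = {c}" using c by auto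
  ultimately show ?thesis by simp
qed

lemma (in vec_space) rank_product_entries_eq_1:
  assumes A: "A \<in> carrier_mat n nc"
    and "\<And>i j. i < n \<Longrightarrow> j < nc \<Longrightarrow> A $$ (i, j) = f i * g j"
    and "r < n" "c < nc" "f r \<noteq> 0" "g c \<noteq> 0"
  shows "rank A = 1"
  using rank_le_1_product_entries[OF A, of f g] rank_pos_if_nonzero_entry[OF A, of r c] A assms
  by fastforce

lemma (in vec_space) rank_smult_one_mat:
  assumes "c \<noteq> 0"
  shows "rank (c \<cdot>\<^sub>m 1\<^sub>m n) = n"
  using det_rank_iff[of "c \<cdot>\<^sub>m 1\<^sub>m n"] assms by simp

lemma mat_sum_carrier [simp]: "mat_sum nr nc f N \<in> carrier_mat nr nc"
  unfolding mat_sum_def by simp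

lemma index_mat_sum [simp]:
  "j < nr \<Longrightarrow> l < nc \<Longrightarrow> mat_sum nr nc f N $$ (j, l) = (\<Sum>i<N. f i $$ (j, l))"
  unfolding mat_sum_def by simp

lemma dim_mat_sum [simp]:
  "dim_row (mat_sum nr nc f N) = nr" "dim_col (mat_sum nr nc f N) = nc"
  unfolding mat_sum_def by simp_all

lemma mat_sum_0: "mat_sum nr nc f 0 = 0\<^sub>m nr nc"
  by (rule eq_matI) (simp_all add: mat_sum_def)

lemma mat_sum_Suc:
  "f N \<in> carrier_mat nr nc \<Longrightarrow> mat_sum nr nc f (Suc N) = mat_sum nr nc f N + f N"
  by (rule eq_matI) (auto simp: mat_sum_def)

lemma rank_mat_sum_le:
  assumes "\<And>i. i < N \<Longrightarrow> f i \<in> carrier_mat nr nc"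
  shows "vec_space.rank nr (mat_sum nr nc f N) \<le> (\<Sum>i<N. vec_space.rank nr (f i))"
  using assms
proof (induction N)
  case 0
  then show ?case by (simp add: mat_sum_0 vec_space.rank_0I)
next
  case (Suc N)
  have "vec_space.rank nr (mat_sum nr nc f (Suc N)) \<le>
      vec_space.rank nr (mat_sum nr nc f N) + vec_space.rank nr (f N)"
    unfolding mat_sum_Suc[of f N nr nc, OF Suc.prems[OF lessI]]
    by (rule vec_space.rank_subadditive[OF mat_sum_carrier Suc.prems[OF lessI]])
  then show ?case using Suc by simp
qed

lemma index_mat_sum_sandwich:
  fixes A B :: "nat \<Rightarrow> complex mat"
  assumes A: "\<And>i. i < N \<Longrightarrow> A i \<in> carrier_mat nr n"
    and B: "\<And>i. i < N \<Longrightarrow> B i \<in> carrier_mat p nc"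
    and X: "X \<in> carrier_mat n p" and j: "j < nr" and l: "l < nc"
  shows "mat_sum nr nc (\<lambda>i. A i * X * B i) N $$ (j, l) =
    (\<Sum>a<n. \<Sum>b<p. X $$ (a, b) * (\<Sum>i<N. A i $$ (j, a) * B i $$ (b, l)))"
proof -
  have "(A i * X * B i) $$ (j, l) = (\<Sum>a<n. \<Sum>b<p. A i $$ (j, a) * X $$ (a, b) * B i $$ (b, l))"
    if "i < N" for i
    using A[OF that] B[OF that] X j l
    by (simp add: scalar_prod_def sum_distrib_left sum_distrib_right atLeast0LessThan mult.assoc)
  then have "mat_sum nr nc (\<lambda>i. A i * X * B i) N $$ (j, l) =
      (\<Sum>i<N. \<Sum>a<n. \<Sum>b<p. A i $$ (j, a) * X $$ (a, b) * B i $$ (b, l))"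
    using j l by simp
  also have "\<dots> = (\<Sum>a<n. \<Sum>b<p. \<Sum>i<N. A i $$ (j, a) * X $$ (a, b) * B i $$ (b, l))"
    by (subst sum.swap, rule sum.cong[OF refl], rule sum.swap)
  finally show ?thesis by (simp add: sum_distrib_left mult_ac)
qed

lemma mat_adjoint_carrier: "A \<in> carrier_mat nr nc \<Longrightarrow> mat_adjoint A \<in> carrier_mat nc nr"
  unfolding mat_adjoint_def by auto

lemma index_mat_adjoint:
  "A \<in> carrier_mat nr nc \<Longrightarrow> i < nc \<Longrightarrow> j < nr \<Longrightarrow> mat_adjoint A $$ (i, j) = cnj (A $$ (j, i))"
  unfolding mat_adjoint_def by (auto simp: mat_of_rows_index)

lemma rank_le_if_rank_one_kraus:
  assumes "rank_one_kraus n k \<Phi> N" and X: "X \<in> carrier_mat n n"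
  shows "vec_space.rank k (\<Phi> X) \<le> N"
proof -
  obtain R where R: "\<And>i. i < N \<Longrightarrow> R i \<in> carrier_mat k n \<and> mrank k (R i) = 1"
    and \<Phi>: "\<Phi> X = mat_sum k k (\<lambda>i. R i * X * mat_adjoint (R i)) N"
    using assms unfolding rank_one_kraus_def by blast
  have carrier: "R i * X * mat_adjoint (R i) \<in> carrier_mat k k" if "i < N" for i
    using R[OF that] X mat_adjoint_carrier by (meson mult_carrier_mat)
  have rank_term: "vec_space.rank k (R i * X * mat_adjoint (R i)) \<le> 1" if i: "i < N" for i
  proof -
    have Ri: "R i \<in> carrier_mat k n" using R[OF i] by simp
    have "vec_space.rank k (R i * X * mat_adjoint (R i)) \<le> vec_space.rank k (R i * X)"
      using Ri X by (intro vec_space.rank_mult_le[OF _ mat_adjoint_carrier[OF Ri]]) simp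
    also have "\<dots> \<le> vec_space.rank k (R i)"
      by (rule vec_space.rank_mult_le[OF Ri X])
    finally show ?thesis using R[OF i] unfolding mrank_def by simp
  qed
  have "vec_space.rank k (\<Phi> X) \<le> (\<Sum>i<N. vec_space.rank k (R i * X * mat_adjoint (R i)))"
    unfolding \<Phi> by (rule rank_mat_sum_le) (fact carrier)
  also have "\<dots> \<le> (\<Sum>i<N. 1)"
    by (rule sum_mono, rule rank_term) simp
  finally show ?thesis by simp
qed

lemma eb_rank_eqI:
  assumes kraus: "rank_one_kraus n k \<Phi> N"
    and "X \<in> carrier_mat n n" and "vec_space.rank k (\<Phi> X) = N"
  shows "eb_rank n k \<Phi> = N"
  unfolding eb_rank_def
proof (rule Least_equality)
  show "rank_one_kraus n k \<Phi> N" by (fact kraus)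
  show "N \<le> K" if "rank_one_kraus n k \<Phi> K" for K
    using rank_le_if_rank_one_kraus[OF that] assms(2,3) by metis
qed

definition unit_root :: "nat \<Rightarrow> complex" where
  "unit_root n = cis (2 * pi / real n)"

lemma unit_root_pow: "unit_root n ^ k = cis (2 * pi * real k / real n)"
  unfolding unit_root_def DeMoivre by (simp add: mult_ac)

lemma unit_root_pow_n [simp]: "0 < n \<Longrightarrow> unit_root n ^ n = 1"
  by (simp add: unit_root_pow)

lemma norm_unit_root_pow [simp]: "norm (unit_root n ^ k) = 1"
  by (simp add: unit_root_pow)

lemma unit_root_pow_mod:
  assumes n: "0 < n"
  shows "unit_root n ^ (k mod n) = unit_root n ^ k"
proof -
  have "unit_root n ^ k = (unit_root n ^ n) ^ (k div n) * unit_root n ^ (k mod n)"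
    by (metis div_mult_mod_eq power_add power_mult mult.commute)
  then show ?thesis using n by simp
qed

lemma unit_root_pow_eq_iff:
  assumes n: "0 < n"
  shows "unit_root n ^ x = unit_root n ^ y \<longleftrightarrow> x mod n = y mod n"
proof
  assume "unit_root n ^ x = unit_root n ^ y"
  then have "unit_root n ^ (x mod n) = unit_root n ^ (y mod n)" by (simp only: unit_root_pow_mod n)
  moreover have "inj_on (\<lambda>k. unit_root n ^ k) {..<n}"
    using bij_betw_roots_unity[OF n] by (simp add: bij_betw_def unit_root_pow)
  ultimately show "x mod n = y mod n" using n by (auto dest: inj_onD)
next
  assume "x mod n = y mod n"
  then show "unit_root n ^ x = unit_root n ^ y" by (metis unit_root_pow_mod n)
qed

lemma sum_unit_root_orthogonality:
  assumes n: "0 < n"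
  shows "(\<Sum>t<n. unit_root n ^ (t * x) * cnj (unit_root n ^ (t * y))) =
    (if x mod n = y mod n then of_nat n else 0)"
proof -
  define z where "z = unit_root n ^ x * cnj (unit_root n ^ y)"
  have unit: "cnj (unit_root n ^ k) * unit_root n ^ k = 1" for k
    using complex_norm_square[of "unit_root n ^ k"] by (simp add: mult.commute)
  have terms: "unit_root n ^ (t * x) * cnj (unit_root n ^ (t * y)) = z ^ t" for t
    by (simp only: z_def power_mult_distrib complex_cnj_power power_mult mult.commute[of t])
  have "z = 1 \<longleftrightarrow> unit_root n ^ x = unit_root n ^ y"
  proof
    assume "z = 1"
    have "unit_root n ^ x = z * unit_root n ^ y"
      unfolding z_def mult.assoc unit by simp
    then show "unit_root n ^ x = unit_root n ^ y" using \<open>z = 1\<close> by simp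
  next
    assume "unit_root n ^ x = unit_root n ^ y"
    then show "z = 1" unfolding z_def using unit by (simp only: mult.commute)
  qed
  then have z1: "z = 1 \<longleftrightarrow> x mod n = y mod n" using unit_root_pow_eq_iff[OF n] by simp
  have "(unit_root n ^ k) ^ n = 1" for k
    by (metis power_mult mult.commute power_one unit_root_pow_n n)
  then have "z ^ n = 1"
    unfolding z_def power_mult_distrib complex_cnj_power[symmetric] by simp
  then have "(\<Sum>t<n. z ^ t) = (if z = 1 then of_nat n else 0)"
    by (simp add: geometric_sum)
  then show ?thesis unfolding terms z1 .
qed

lemma sum_shift_mod_indicator:
  fixes a j n :: nat
  assumes n: "0 < n" and j: "j < n"
  shows "(\<Sum>i<n. if (a + i) mod n = j then 1 else 0 :: 'a::comm_semiring_1) = 1"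
proof -
  have "inj_on (\<lambda>i. (a + i) mod n) {..<n}"
  proof (rule inj_onI)
    fix x y assume "x \<in> {..<n}" "y \<in> {..<n}" "(a + x) mod n = (a + y) mod n"
    then have "[x = y] (mod n)" by (simp flip: cong_def add: cong_add_lcancel_nat)
    then show "x = y" using \<open>x \<in> {..<n}\<close> \<open>y \<in> {..<n}\<close> by (simp add: cong_def)
  qed
  then have "bij_betw (\<lambda>i. (a + i) mod n) {..<n} {..<n}"
    using n by (simp add: bij_betw_def endo_inj_surj image_subsetI)
  from sum.reindex_bij_betw[OF this, of "\<lambda>k. if k = j then 1 else 0 :: 'a"]
  show ?thesis using j by simp
qed

lemma sum_shift_mod_pair_indicator:
  fixes a b j l n :: nat
  assumes n: "0 < n"
  shows "(\<Sum>i<n. if j = (a + i) mod n \<and> l = (b + i) mod n then 1 else 0 :: 'a::comm_semiring_1) =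
    (if j < n \<and> l < n \<and> (j + b) mod n = (l + a) mod n then 1 else 0)"
proof (cases "j < n \<and> l < n")
  case True
  have "(j = (a + i) mod n \<and> l = (b + i) mod n) \<longleftrightarrow>
      ((a + i) mod n = j \<and> (j + b) mod n = (l + a) mod n)" for i
  proof -
    have "l = (b + i) mod n \<longleftrightarrow> [l = b + i] (mod n)"
      using True by (simp add: cong_def)
    also have "\<dots> \<longleftrightarrow> [l + a = b + i + a] (mod n)"
      by (rule cong_add_rcancel_nat[symmetric])
    finally have l_iff: "l = (b + i) mod n \<longleftrightarrow> (l + a) mod n = (b + i + a) mod n"
      unfolding cong_def .
    have "(a + i) mod n = j \<Longrightarrow> (j + b) mod n = (b + i + a) mod n"
      by (auto simp: mod_add_right_eq ac_simps)
    then show ?thesis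
      unfolding l_iff by auto
  qed
  then have "(\<Sum>i<n. if j = (a + i) mod n \<and> l = (b + i) mod n then 1 else 0 :: 'a) =
      (\<Sum>i<n. if (j + b) mod n = (l + a) mod n then (if (a + i) mod n = j then 1 else 0) else 0)"
    by (intro sum.cong) auto
  then show ?thesis using True by (simp add: sum_shift_mod_indicator[OF n])
next
  case False
  then have "\<not> (j = (a + i) mod n \<and> l = (b + i) mod n)" for i
    using n by auto
  then show ?thesis using False by auto
qed

lemma sum_lessThan_split:
  fixes k n :: nat
  shows "k \<le> n \<Longrightarrow> (\<Sum>i<n. f i) = (\<Sum>i<k. f i) + (\<Sum>i\<in>{k..<n}. f i)"
  using sum.atLeastLessThan_concat[of 0 k n f] by (simp add: atLeast0LessThan)

lemma sum_pair_indicator: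
  "finite A \<Longrightarrow> (\<Sum>i\<in>A. if j = i \<and> l = i then 1 else 0 :: 'a::comm_semiring_1) =
    (if j \<in> A \<and> j = l then 1 else 0)"
proof -
  assume "finite A"
  have "(\<Sum>i\<in>A. if j = i \<and> l = i then 1 else 0 :: 'a) =
      (\<Sum>i\<in>A. if i = j then (if j = l then 1 else 0) else 0)"
    by (rule sum.cong) auto
  then show ?thesis using \<open>finite A\<close> by auto
qed

text \<open>The Choi matrix of Phi_map, up to the factor d (d + m).\<close>

definition Phi_coeff :: "nat \<Rightarrow> nat \<Rightarrow> nat \<Rightarrow> nat \<Rightarrow> nat \<Rightarrow> complex" where
  "Phi_coeff d a b j l =
    (if j < d + 1 \<and> l < d + 1 \<and> (j + b) mod (d + 1) = (l + a) mod (d + 1) then 1 else 0) +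
    (if d < j \<and> j = l then 1 else 0)"

lemma Phi_coeff_diag: "Phi_coeff d a a j l = (if j = l then 1 else 0)"
proof -
  have "(j + a) mod (d + 1) = (l + a) mod (d + 1) \<longleftrightarrow> j = l" if "j < d + 1" "l < d + 1"
    using that by (simp flip: cong_def add: cong_add_rcancel_nat) (simp add: cong_def)
  then show ?thesis by (auto simp: Phi_coeff_def)
qed

lemma Vmat_carrier: "Vmat d m i \<in> carrier_mat d (d + m)"
  unfolding Vmat_def by simp

lemma index_Vmat:
  "k < d \<Longrightarrow> j < d + m \<Longrightarrow> Vmat d m i $$ (k, j) =
    (if i \<le> d then (if j = (k + i) mod (d + 1) then 1 else 0) else (if j = i then 1 else 0))"
  unfolding Vmat_def by simp

lemma Vmat_adjoint_coeff:
  assumes a: "a < d" and b: "b < d" and j: "j < d + m" and l: "l < d + m"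
  shows "mat_adjoint (Vmat d m i) $$ (j, a) * Vmat d m i $$ (b, l) =
    (if i \<le> d then (if j = (a + i) mod (d + 1) \<and> l = (b + i) mod (d + 1) then 1 else 0)
     else (if j = i \<and> l = i then 1 else 0))"
proof -
  have "mat_adjoint (Vmat d m i) $$ (j, a) = cnj (Vmat d m i $$ (a, j))"
    using j a by (rule index_mat_adjoint[OF Vmat_carrier])
  then show ?thesis
    using a b j l by (simp add: index_Vmat)
qed

lemma sum_Vmat_coeff:
  assumes m: "1 \<le> m" and a: "a < d" and b: "b < d" and j: "j < d + m" and l: "l < d + m"
  shows "(\<Sum>i<d+m. mat_adjoint (Vmat d m i) $$ (j, a) * Vmat d m i $$ (b, l)) = Phi_coeff d a b j l"
proof -
  let ?F = "\<lambda>i. mat_adjoint (Vmat d m i) $$ (j, a) * Vmat d m i $$ (b, l)"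
  have "(\<Sum>i<d+1. ?F i) =
      (\<Sum>i<d+1. if j = (a + i) mod (d + 1) \<and> l = (b + i) mod (d + 1) then 1 else 0)"
    by (rule sum.cong) (simp_all add: Vmat_adjoint_coeff[OF a b j l])
  also have "\<dots> =
      (if j < d + 1 \<and> l < d + 1 \<and> (j + b) mod (d + 1) = (l + a) mod (d + 1) then 1 else 0)"
    by (rule sum_shift_mod_pair_indicator) simp
  finally have head: "(\<Sum>i<d+1. ?F i) = \<dots>" .
  have "(\<Sum>i\<in>{d+1..<d+m}. ?F i) = (\<Sum>i\<in>{d+1..<d+m}. if j = i \<and> l = i then 1 else 0)"
    by (rule sum.cong) (simp_all add: Vmat_adjoint_coeff[OF a b j l])
  also have "\<dots> = (if d < j \<and> j = l then 1 else 0)"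
    using j by (simp add: sum_pair_indicator)
  finally have tail: "(\<Sum>i\<in>{d+1..<d+m}. ?F i) = \<dots>" .
  show ?thesis
    unfolding sum_lessThan_split[of "d + 1" "d + m", OF add_left_mono[OF m]] head tail Phi_coeff_def ..
qed

lemma index_Phi_map:
  assumes m: "1 \<le> m" and X: "X \<in> carrier_mat d d" and j: "j < d + m" and l: "l < d + m"
  shows "Phi_map d m X $$ (j, l) =
    (\<Sum>a<d. \<Sum>b<d. X $$ (a, b) * Phi_coeff d a b j l) / of_nat (d * (d + m))"
proof -
  let ?S = "mat_sum (d + m) (d + m) (\<lambda>i. mat_adjoint (Vmat d m i) * X * Vmat d m i) (d + m)"
  have "?S $$ (j, l) =
      (\<Sum>a<d. \<Sum>b<d. X $$ (a, b) *
        (\<Sum>i<d+m. mat_adjoint (Vmat d m i) $$ (j, a) * Vmat d m i $$ (b, l)))"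
    by (rule index_mat_sum_sandwich[OF mat_adjoint_carrier[OF Vmat_carrier] Vmat_carrier X j l])
  then have "?S $$ (j, l) = (\<Sum>a<d. \<Sum>b<d. X $$ (a, b) * Phi_coeff d a b j l)"
    by (simp add: sum_Vmat_coeff[OF m _ _ j l])
  then show ?thesis
    using j l by (simp add: Phi_map_def)
qed

text \<open>For t <= d, Phi_kraus d m t is a multiple of the Fourier operator |f_t><g_t|;
  for t > d it is a multiple of (Vmat d m t)^dagger = |e_t><J|.\<close>

definition kraus_col :: "nat \<Rightarrow> nat \<Rightarrow> nat \<Rightarrow> complex" where
  "kraus_col d t r =
    (if t \<le> d then (if r \<le> d then unit_root (d + 1) ^ (t * r) else 0) else (if r = t then 1 else 0))"

definition kraus_row :: "nat \<Rightarrow> nat \<Rightarrow> nat \<Rightarrow> complex" where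
  "kraus_row d t a = (if t \<le> d then cnj (unit_root (d + 1) ^ (t * a)) else 1)"

definition kraus_weight :: "nat \<Rightarrow> nat \<Rightarrow> nat \<Rightarrow> real" where
  "kraus_weight d m t = 1 / (real (d * (d + m)) * (if t \<le> d then real (d + 1) else 1))"

definition Phi_kraus :: "nat \<Rightarrow> nat \<Rightarrow> nat \<Rightarrow> complex mat" where
  "Phi_kraus d m t = mat (d + m) d (\<lambda>(r, a).
    of_real (sqrt (kraus_weight d m t)) * kraus_col d t r * kraus_row d t a)"

lemma Phi_kraus_carrier: "Phi_kraus d m t \<in> carrier_mat (d + m) d"
  unfolding Phi_kraus_def by simp

lemma Phi_kraus_coeff:
  assumes a: "a < d" and b: "b < d" and j: "j < d + m" and l: "l < d + m"
  shows "Phi_kraus d m t $$ (j, a) * mat_adjoint (Phi_kraus d m t) $$ (b, l) =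
    of_real (kraus_weight d m t) *
    (kraus_col d t j * cnj (kraus_col d t l) * (kraus_row d t a * cnj (kraus_row d t b)))"
proof -
  define s where "s = complex_of_real (sqrt (kraus_weight d m t))"
  have s: "cnj s = s" "s * s = of_real (kraus_weight d m t)"
    unfolding s_def by (simp_all flip: of_real_mult add: kraus_weight_def)
  have "Phi_kraus d m t $$ (j, a) * mat_adjoint (Phi_kraus d m t) $$ (b, l) =
      s * kraus_col d t j * kraus_row d t a * cnj (s * kraus_col d t l * kraus_row d t b)"
    using a b j l by (simp add: index_mat_adjoint[OF Phi_kraus_carrier]) (simp add: Phi_kraus_def s_def)
  also have "\<dots> = (s * s) *
      (kraus_col d t j * cnj (kraus_col d t l) * (kraus_row d t a * cnj (kraus_row d t b)))"
    by (simp only: complex_cnj_mult s(1) ac_simps)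
  finally show ?thesis unfolding s(2) .
qed

lemma kraus_weight_head:
  "t \<le> d \<Longrightarrow> complex_of_real (kraus_weight d m t) = 1 / of_nat (d * (d + m)) / of_nat (d + 1)"
  by (simp add: kraus_weight_def)

lemma kraus_weight_tail:
  "d < t \<Longrightarrow> complex_of_real (kraus_weight d m t) = 1 / of_nat (d * (d + m))"
  by (simp add: kraus_weight_def)

lemma kraus_col_row_head:
  assumes "t \<le> d"
  shows "kraus_col d t j * cnj (kraus_col d t l) * (kraus_row d t a * cnj (kraus_row d t b)) =
    (if j \<le> d \<and> l \<le> d
     then unit_root (d + 1) ^ (t * (j + b)) * cnj (unit_root (d + 1) ^ (t * (l + a))) else 0)"
  using assms by (simp add: kraus_col_def kraus_row_def distrib_left power_add mult_ac)

lemma sum_Phi_kraus_coeff: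
  assumes m: "1 \<le> m" and a: "a < d" and b: "b < d" and j: "j < d + m" and l: "l < d + m"
  shows "(\<Sum>t<d+m. Phi_kraus d m t $$ (j, a) * mat_adjoint (Phi_kraus d m t) $$ (b, l)) =
    Phi_coeff d a b j l / of_nat (d * (d + m))"
proof -
  let ?F = "\<lambda>t. Phi_kraus d m t $$ (j, a) * mat_adjoint (Phi_kraus d m t) $$ (b, l)"
  let ?c = "1 / of_nat (d * (d + m)) :: complex"
  let ?\<omega> = "unit_root (d + 1)"
  have "(\<Sum>t<d+1. ?F t) = (\<Sum>t<d+1. ?c / of_nat (d + 1) *
      (if j \<le> d \<and> l \<le> d then ?\<omega> ^ (t * (j + b)) * cnj (?\<omega> ^ (t * (l + a))) else 0))"
  proof (rule sum.cong[OF refl])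
    fix t assume "t \<in> {..<d+1}"
    then have t: "t \<le> d" by simp
    show "?F t = ?c / of_nat (d + 1) *
        (if j \<le> d \<and> l \<le> d then ?\<omega> ^ (t * (j + b)) * cnj (?\<omega> ^ (t * (l + a))) else 0)"
      unfolding Phi_kraus_coeff[OF a b j l] kraus_col_row_head[OF t] kraus_weight_head[OF t] ..
  qed
  also have "\<dots> = ?c / of_nat (d + 1) *
      (if j \<le> d \<and> l \<le> d
       then (\<Sum>t<d+1. ?\<omega> ^ (t * (j + b)) * cnj (?\<omega> ^ (t * (l + a)))) else 0)"
  proof (cases "j \<le> d \<and> l \<le> d")
    case True
    then show ?thesis by (simp only: simp_thms if_True sum_distrib_left)
  next
    case False
    then show ?thesis by (simp only: if_False mult_zero_right sum.neutral_const)
  qed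
  also have "\<dots> =
      (if j < d + 1 \<and> l < d + 1 \<and> (j + b) mod (d + 1) = (l + a) mod (d + 1) then ?c else 0)"
    unfolding sum_unit_root_orthogonality[of "d + 1", OF zero_less_Suc[of d, unfolded Suc_eq_plus1]]
    using of_nat_neq_0[of d, where 'a = complex] by simp
  finally have head: "(\<Sum>t<d+1. ?F t) = \<dots>" .
  have "(\<Sum>t\<in>{d+1..<d+m}. ?F t) =
      (\<Sum>t\<in>{d+1..<d+m}. ?c * (if j = t \<and> l = t then 1 else 0))"
  proof (rule sum.cong[OF refl])
    fix t assume "t \<in> {d+1..<d+m}"
    then have t: "d < t" by simp
    then show "?F t = ?c * (if j = t \<and> l = t then 1 else 0)"
      by (simp add: Phi_kraus_coeff[OF a b j l] kraus_weight_tail kraus_col_def kraus_row_def)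
  qed
  also have "\<dots> = ?c * (\<Sum>t\<in>{d+1..<d+m}. if j = t \<and> l = t then 1 else 0)"
    by (rule sum_distrib_left[symmetric])
  also have "\<dots> = ?c * (if d < j \<and> j = l then 1 else 0)"
    unfolding sum_pair_indicator[OF finite_atLeastLessThan] using j by simp
  finally have tail: "(\<Sum>t\<in>{d+1..<d+m}. ?F t) = \<dots>" .
  show ?thesis
    unfolding sum_lessThan_split[of "d + 1" "d + m", OF add_left_mono[OF m]] head tail Phi_coeff_def
    by (simp add: add_divide_distrib)
qed

lemma Phi_map_eq_kraus_sum:
  assumes m: "1 \<le> m" and X: "X \<in> carrier_mat d d"
  shows "Phi_map d m X =
    mat_sum (d + m) (d + m) (\<lambda>t. Phi_kraus d m t * X * mat_adjoint (Phi_kraus d m t)) (d + m)"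
    (is "_ = ?K")
proof (rule eq_matI)
  fix j l assume "j < dim_row ?K" "l < dim_col ?K"
  then have j: "j < d + m" and l: "l < d + m" by simp_all
  have "?K $$ (j, l) = (\<Sum>a<d. \<Sum>b<d. X $$ (a, b) *
      (\<Sum>t<d+m. Phi_kraus d m t $$ (j, a) * mat_adjoint (Phi_kraus d m t) $$ (b, l)))"
    by (rule index_mat_sum_sandwich[OF Phi_kraus_carrier mat_adjoint_carrier[OF Phi_kraus_carrier]
          X j l])
  also have "\<dots> = Phi_map d m X $$ (j, l)"
    by (simp add: index_Phi_map[OF m X j l] sum_Phi_kraus_coeff[OF m _ _ j l] sum_divide_distrib)
  finally show "Phi_map d m X $$ (j, l) = ?K $$ (j, l)" ..
qed (simp_all add: Phi_map_def)

lemma rank_Phi_kraus: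
  assumes d: "1 \<le> d" and t: "t < d + m"
  shows "mrank (d + m) (Phi_kraus d m t) = 1"
proof -
  let ?s = "complex_of_real (sqrt (kraus_weight d m t))"
  let ?r = "if t \<le> d then 0 else t"
  have "vec_space.rank (d + m) (Phi_kraus d m t) = 1"
  proof (rule vec_space.rank_product_entries_eq_1[OF Phi_kraus_carrier[of d m t],
        where f = "\<lambda>r. ?s * kraus_col d t r" and g = "kraus_row d t" and r = ?r and c = 0])
    show "Phi_kraus d m t $$ (i, k) = ?s * kraus_col d t i * kraus_row d t k"
      if "i < d + m" "k < d" for i k
      using that by (simp add: Phi_kraus_def)
    show "?r < d + m" "0 < d" using d t by simp_all
    show "?s * kraus_col d t ?r \<noteq> 0" using d by (simp add: kraus_weight_def kraus_col_def)
    show "kraus_row d t 0 \<noteq> 0" by (simp add: kraus_row_def)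
  qed
  then show ?thesis unfolding mrank_def .
qed

lemma Phi_map_one:
  assumes d: "1 \<le> d" and m: "1 \<le> m"
  shows "Phi_map d m (1\<^sub>m d) = (1 / of_nat (d + m)) \<cdot>\<^sub>m 1\<^sub>m (d + m)"
proof (rule eq_matI)
  fix j l assume "j < dim_row ((1 / of_nat (d + m)) \<cdot>\<^sub>m 1\<^sub>m (d + m) :: complex mat)"
    "l < dim_col ((1 / of_nat (d + m)) \<cdot>\<^sub>m 1\<^sub>m (d + m) :: complex mat)"
  then have j: "j < d + m" and l: "l < d + m" by simp_all
  have "(\<Sum>a<d. \<Sum>b<d. 1\<^sub>m d $$ (a, b) * Phi_coeff d a b j l) = (\<Sum>a<d. Phi_coeff d a a j l)"
    by (rule sum.cong[OF refl]) (simp add: if_distrib[of "\<lambda>x. x * _"] cong: if_cong)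
  also have "\<dots> = of_nat d * (if j = l then 1 else 0)"
    by (simp add: Phi_coeff_diag)
  finally show "Phi_map d m (1\<^sub>m d) $$ (j, l) = ((1 / of_nat (d + m)) \<cdot>\<^sub>m 1\<^sub>m (d + m)) $$ (j, l)"
    using d j l by (simp add: index_Phi_map[OF m one_carrier_mat j l])
qed (simp_all add: Phi_map_def)

lemma rank_one_kraus_Phi_map:
  assumes "1 \<le> d" and "1 \<le> m"
  shows "rank_one_kraus d (d + m) (Phi_map d m) (d + m)"
  unfolding rank_one_kraus_def
  using Phi_kraus_carrier rank_Phi_kraus[OF assms(1)] Phi_map_eq_kraus_sum[OF assms(2)] by blast

lemma rank_Phi_map_one:
  assumes d: "1 \<le> d" and m: "1 \<le> m"
  shows "vec_space.rank (d + m) (Phi_map d m (1\<^sub>m d)) = d + m"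
proof -
  have "of_nat (d + m) \<noteq> (0 :: complex)" using d by (simp only: of_nat_eq_0_iff)
  then have "(1 / of_nat (d + m) :: complex) \<noteq> 0" by simp
  then show ?thesis
    unfolding Phi_map_one[OF d m] by (rule vec_space.rank_smult_one_mat)
qed

theorem mainTheorem4:
  fixes d m :: nat
  assumes "d \<ge> 2" and "m \<ge> 1"
  shows "entanglement_breaking d (d+m) (Phi_map d m) \<and> eb_rank d (d+m) (Phi_map d m) = d + m"
proof -
  have d: "1 \<le> d" using assms(1) by simp
  note kraus = rank_one_kraus_Phi_map[OF d assms(2)]
  show ?thesis
    using kraus eb_rank_eqI[OF kraus one_carrier_mat rank_Phi_map_one[OF d assms(2)]]
    unfolding entanglement_breaking_def by blast
qed

end
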